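(* Let $r,n,m_1,m_2,L_1,L_2$ be positive integers with $L_1>m_1$ and $L_2>m_2$, and let $\mathbf{H}_{i,j}\in\mathcal{P}^{r\times n}$, $0\le i\le m_1$, $0\le j\le m_2$, be the component matrices of a two-dimensional spatially-coupled (2D-SC) code with parameters $(m_1,m_2,L_1,L_2)$. Suppose that $$\sum_{i=0}^{m_1-d_1}\sum_{j=0}^{m_2-d_2}\langle \mathbf{H}_{i,j},\mathbf{H}_{i+d_1,j+d_2}\rangle_s=\mathbf{0}_{r\times r}\quad\text{for all }0\le d_1\le m_1,\ 0\le d_2\le m_2,$$ and $$\sum_{i=0}^{m_1-d_1}\sum_{j=0}^{m_2-d_2}\langle \mathbf{H}_{i+d_1,j},\mathbf{H}_{i,j+d_2}\rangle_s=\mathbf{0}_{r\times r}\quad\text{for all }0\le d_1\le m_1,\ 0\le d_2\le m_2.$$ Then the 2D-SC code is a stabilizer code, i.e. the $N$-qubit Pauli operators given by the rows of its parity-check matrix pairwise commute.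
   Context: $\mathcal{P}$ denotes the single-qubit Pauli matrices $\{I,X,Y,Z\}$ (phases ignored). For single-qubit Paulis $P,Q$ the symplectic product $\langle P,Q\rangle_s\in\mathbb{F}_2$ is $0$ if $P$ and $Q$ commute (i.e. $P=I$, $Q=I$ or $P=Q$) and $1$ otherwise. For $\mathbf{P}\in\mathcal{P}^{m_1\times n}$, $\mathbf{Q}\in\mathcal{P}^{m_2\times n}$, $\langle\mathbf{P},\mathbf{Q}\rangle_s$ is the $m_1\times m_2$ binary matrix with $(i,j)$ entry $\sum_{k=1}^n\langle P_{i,k},Q_{j,k}\rangle_s \bmod 2$; this is $0$ exactly when the tensor-product Pauli operators given by row $i$ of $\mathbf{P}$ and row $j$ of $\mathbf{Q}$ commute. The (tail-biting) 2D-SC code with component matrices $\mathbf{H}_{i,j}$ and coupling lengths $L_1,L_2$ has the $rL_1L_2\times nL_1L_2$ parity-check matrix $\mathbf{H}$ (entries in $\mathcal{P}$) whose row blocks are indexed by $(a,b)\in\mathbb{Z}_{L_1}\times\mathbb{Z}_{L_2}$ and column blocks by $(c,d)\in\mathbb{Z}_{L_1}\times\mathbb{Z}_{L_2}$ (blocks ordered lexicographically), where the $((a,b),(c,d))$ block is $\mathbf{H}_{i,j}$ if there are $0\le i\le m_1$, $0\le j\le m_2$ with $i\equiv a-c \pmod{L_1}$ and $j\equiv b-d\pmod{L_2}$, and is the all-$I$ matrix otherwise. Each row of $\mathbf{H}$ is read as an $N=nL_1L_2$-qubit Pauli operator (tensor product of its entries). *)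

theory Defs
  imports Main
begin

text \<open>Single-qubit Pauli matrices, phases ignored.\<close>
datatype pauli = PI | PX | PY | PZ

definition sympl :: "pauli \<Rightarrow> pauli \<Rightarrow> nat" where
  "sympl P Q = (if P = PI \<or> Q = PI \<or> P = Q then 0 else 1)"

text \<open>An m x n Pauli matrix is a function row \<Rightarrow> column \<Rightarrow> pauli (only the entries
  with row < m, column < n matter).\<close>
definition sympl_mat :: "nat \<Rightarrow> (nat \<Rightarrow> nat \<Rightarrow> pauli) \<Rightarrow> (nat \<Rightarrow> nat \<Rightarrow> pauli) \<Rightarrow> nat \<Rightarrow> nat \<Rightarrow> nat" where
  "sympl_mat n P Q a b = (\<Sum>k<n. sympl (P a k) (Q b k)) mod 2"

text \<open>Tail-biting 2D-SC parity-check matrix.  Component matrices are given by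
  Hc i j (an r x n Pauli matrix, for 0 \<le> i \<le> m1, 0 \<le> j \<le> m2).
  Row blocks (a,b), column blocks (c,d) in Z_L1 x Z_L2, ordered lexicographically:
  global row index ((a*L2+b)*r + t), global column index ((c*L2+d)*n + k).
  Block ((a,b),(c,d)) is Hc i j for the i \<le> m1, j \<le> m2 with i \<equiv> a-c (mod L1),
  j \<equiv> b-d (mod L2) (unique when L1 > m1, L2 > m2), and all-I otherwise.\<close>
definition sc2d_block :: "nat \<Rightarrow> nat \<Rightarrow> nat \<Rightarrow> nat \<Rightarrow> nat \<Rightarrow> nat
    \<Rightarrow> (nat \<Rightarrow> nat \<Rightarrow> nat \<Rightarrow> nat \<Rightarrow> pauli)
    \<Rightarrow> nat \<Rightarrow> nat \<Rightarrow> nat \<Rightarrow> nat \<Rightarrow> nat \<Rightarrow> nat \<Rightarrow> pauli" where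
  "sc2d_block m1 m2 L1 L2 r n Hc a b c d t k =
     (if \<exists>i\<le>m1. \<exists>j\<le>m2. int i mod int L1 = (int a - int c) mod int L1 \<and> int j mod int L2 = (int b - int d) mod int L2
      then (let i = nat ((int a - int c) mod int L1); j = nat ((int b - int d) mod int L2)
            in Hc i j t k)
      else PI)"

definition sc2d_H :: "nat \<Rightarrow> nat \<Rightarrow> nat \<Rightarrow> nat \<Rightarrow> nat \<Rightarrow> nat
    \<Rightarrow> (nat \<Rightarrow> nat \<Rightarrow> nat \<Rightarrow> nat \<Rightarrow> pauli) \<Rightarrow> nat \<Rightarrow> nat \<Rightarrow> pauli" where
  "sc2d_H m1 m2 L1 L2 r n Hc R C =
     (let rb = R div r; t = R mod r; a = rb div L2; b = rb mod L2;
          cb = C div n; k = C mod n; c = cb div L2; d = cb mod L2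
      in sc2d_block m1 m2 L1 L2 r n Hc a b c d t k)"

definition rows_commute :: "nat \<Rightarrow> (nat \<Rightarrow> nat \<Rightarrow> pauli) \<Rightarrow> nat \<Rightarrow> nat \<Rightarrow> bool" where
  "rows_commute N M R1 R2 \<longleftrightarrow> sympl_mat N M M R1 R2 = 0"

end

theory Submission
  imports Defs
begin

(* Write a row index as a block (a, b) and a row t inside it.  Counted over the integers,
   the symplectic product of two rows is a sum over all column blocks (c, d) of the products
   of the component matrices H_{a-c,b-d} and H_{a'-c,b'-d} (indices mod L1, L2).  The
   substitution (i, j) = (a - c, b - d) turns it into a cyclic correlation of the components
   with shift (D1, D2) = (a' - a, b' - b).  Since the components vanish outside
   [0, m1] x [0, m2] and L1 > m1, L2 > m2, a cyclic shift by D only pairs indices that differ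
   by D without wrapping around, or by L - D in the opposite direction.  This splits the
   correlation into four window sums, and each of them is one of the two hypotheses for one
   of the two orders of the rows. *)

lemma sum_lessThan_mult_eq:
  fixes g :: "nat \<Rightarrow> 'a::comm_monoid_add"
  shows "(\<Sum>C < m * n. g C) = (\<Sum>q<m. \<Sum>k<n. g (q * n + k))"
proof -
  have "(\<Sum>C < m * n. g C) = (\<Sum>q<m. sum g {q * n..<q * n + n})"
    using sum.nat_group[of g n m] by simp
  also have "\<dots> = (\<Sum>q<m. \<Sum>k<n. g (q * n + k))"
    by (simp add: sum.atLeastLessThan_shift_0[of g] atLeast0LessThan)
  finally show ?thesis .
qed

definition cyclic_diff :: "nat \<Rightarrow> nat \<Rightarrow> nat \<Rightarrow> nat" where
  "cyclic_diff L x y = nat ((int x - int y) mod int L)"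

lemma cyclic_diff_less: "0 < L \<Longrightarrow> cyclic_diff L x y < L"
  by (simp add: cyclic_diff_def nat_less_iff)

lemma int_cyclic_diff: "0 < L \<Longrightarrow> int (cyclic_diff L x y) = (int x - int y) mod int L"
  by (simp add: cyclic_diff_def)

lemma cyclic_diff_cyclic_diff:
  assumes "y < L"
  shows "cyclic_diff L x (cyclic_diff L x y) = y"
proof -
  have "int (cyclic_diff L x (cyclic_diff L x y)) = (int x - (int x - int y) mod int L) mod int L"
    using assms by (simp add: int_cyclic_diff)
  also have "\<dots> = int y mod int L"
    by (simp add: mod_diff_right_eq)
  also have "\<dots> = int y"
    using assms by simp
  finally show ?thesis
    by simp
qed

lemma cyclic_diff_trans:
  assumes "0 < L"
  shows "cyclic_diff L x' y = (cyclic_diff L x y + cyclic_diff L x' x) mod L"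
proof -
  have "int ((cyclic_diff L x y + cyclic_diff L x' x) mod L)
      = ((int x - int y) mod int L + (int x' - int x) mod int L) mod int L"
    using assms by (simp add: of_nat_mod int_cyclic_diff)
  also have "\<dots> = (int x' - int y) mod int L"
    by (simp add: mod_add_eq)
  also have "\<dots> = int (cyclic_diff L x' y)"
    using assms by (simp add: int_cyclic_diff)
  finally show ?thesis
    by (metis of_nat_eq_iff)
qed

lemma sum_cyclic_diff_reindex:
  assumes "0 < L"
  shows "(\<Sum>c<L. h (cyclic_diff L x c) (cyclic_diff L x' c))
       = (\<Sum>i<L. h i ((i + cyclic_diff L x' x) mod L))"
proof (rule sum.reindex_bij_witness[where i="cyclic_diff L x" and j="cyclic_diff L x"])
  fix c assume "c \<in> {..<L}"
  then show "h (cyclic_diff L x c) ((cyclic_diff L x c + cyclic_diff L x' x) mod L)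
           = h (cyclic_diff L x c) (cyclic_diff L x' c)"
    using cyclic_diff_trans[OF assms] by metis
qed (use assms in \<open>simp_all add: cyclic_diff_cyclic_diff cyclic_diff_less\<close>)

lemma sum_cyclic_shift_supported:
  fixes F :: "nat \<Rightarrow> nat \<Rightarrow> 'a::comm_monoid_add"
  assumes "m < L" and "D < L" and supp: "\<And>i i'. m < i \<or> m < i' \<Longrightarrow> F i i' = 0"
  shows "(\<Sum>i<L. F i ((i + D) mod L))
       = (\<Sum>i\<le>m - D. F i (i + D)) + (\<Sum>i\<le>m - (L - D). F (i + (L - D)) i)"
  \<comment> \<open>for D = 0 the second sum is the single vanishing term F L 0, so no case split is needed\<close>
proof -
  have "(\<Sum>i<L. F i ((i + D) mod L))
      = (\<Sum>i<L - D. F i ((i + D) mod L)) + (\<Sum>i\<in>{L - D..<L}. F i ((i + D) mod L))"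
    by (simp only: lessThan_atLeast0 sum.atLeastLessThan_concat[of 0 "L - D" L, symmetric] diff_le_self zero_le)
  moreover have "(\<Sum>i<L - D. F i ((i + D) mod L)) = (\<Sum>i\<le>m - D. F i (i + D))"
  proof -
    have "(\<Sum>i<L - D. F i ((i + D) mod L)) = (\<Sum>i<L - D. F i (i + D))"
      by (rule sum.cong) auto
    also have "\<dots> = (\<Sum>i\<le>m - D. F i (i + D))"
    proof (cases "D \<le> m")
      case True
      then show ?thesis
        using \<open>m < L\<close> by (intro sum.mono_neutral_right) (auto intro!: supp)
    next
      case False
      then show ?thesis by (simp add: supp)
    qed
    finally show ?thesis .
  qed
  moreover have "(\<Sum>i\<in>{L - D..<L}. F i ((i + D) mod L)) = (\<Sum>i\<le>m - (L - D). F (i + (L - D)) i)"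
  proof -
    have "(\<Sum>i\<in>{L - D..<L}. F i ((i + D) mod L)) = (\<Sum>i<D. F (i + (L - D)) ((i + (L - D) + D) mod L))"
      using \<open>D < L\<close> by (simp add: sum.atLeastLessThan_shift_0 atLeast0LessThan add.commute)
    also have "\<dots> = (\<Sum>i<D. F (i + (L - D)) i)"
      using \<open>D < L\<close> by (intro sum.cong) auto
    also have "\<dots> = (\<Sum>i\<le>m - (L - D). F (i + (L - D)) i)"
    proof (cases "L - D \<le> m")
      case True
      then show ?thesis
        using \<open>m < L\<close> by (intro sum.mono_neutral_right) (auto intro!: supp)
    next
      case False
      then have "(\<Sum>i<D. F (i + (L - D)) i) = 0"
        by (intro sum.neutral ballI supp) auto
      with False show ?thesis by (simp add: supp)
    qed
    finally show ?thesis .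
  qed
  ultimately show ?thesis by simp
qed

lemma sum_cyclic_shift2_supported:
  fixes F :: "nat \<Rightarrow> nat \<Rightarrow> nat \<Rightarrow> nat \<Rightarrow> 'a::comm_monoid_add"
  assumes "m1 < L1" "D1 < L1" "m2 < L2" "D2 < L2"
    and supp: "\<And>i j i' j'. m1 < i \<or> m2 < j \<or> m1 < i' \<or> m2 < j' \<Longrightarrow> F i j i' j' = 0"
  shows "(\<Sum>i<L1. \<Sum>j<L2. F i j ((i + D1) mod L1) ((j + D2) mod L2))
       = (\<Sum>i\<le>m1 - D1. \<Sum>j\<le>m2 - D2. F i j (i + D1) (j + D2))
       + (\<Sum>i\<le>m1 - D1. \<Sum>j\<le>m2 - (L2 - D2). F i (j + (L2 - D2)) (i + D1) j)
       + (\<Sum>i\<le>m1 - (L1 - D1). \<Sum>j\<le>m2 - D2. F (i + (L1 - D1)) j i (j + D2))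
       + (\<Sum>i\<le>m1 - (L1 - D1). \<Sum>j\<le>m2 - (L2 - D2). F (i + (L1 - D1)) (j + (L2 - D2)) i j)"
proof -
  have inner: "(\<Sum>j<L2. F i j i' ((j + D2) mod L2))
      = (\<Sum>j\<le>m2 - D2. F i j i' (j + D2)) + (\<Sum>j\<le>m2 - (L2 - D2). F i (j + (L2 - D2)) i' j)"
    for i i'
    using assms(3,4) by (rule sum_cyclic_shift_supported) (auto intro: supp)
  have "(\<Sum>i<L1. \<Sum>j<L2. F i j ((i + D1) mod L1) ((j + D2) mod L2))
      = (\<Sum>i\<le>m1 - D1. \<Sum>j<L2. F i j (i + D1) ((j + D2) mod L2))
      + (\<Sum>i\<le>m1 - (L1 - D1). \<Sum>j<L2. F (i + (L1 - D1)) j i ((j + D2) mod L2))"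
    using assms(1,2) by (rule sum_cyclic_shift_supported) (auto intro!: sum.neutral supp)
  then show ?thesis
    by (simp only: inner sum.distrib add.assoc)
qed

definition sympl_count :: "nat \<Rightarrow> (nat \<Rightarrow> nat \<Rightarrow> pauli) \<Rightarrow> (nat \<Rightarrow> nat \<Rightarrow> pauli) \<Rightarrow> nat \<Rightarrow> nat \<Rightarrow> nat" where
  "sympl_count n P Q a b = (\<Sum>k<n. sympl (P a k) (Q b k))"

lemma sympl_commute: "sympl P Q = sympl Q P"
  by (auto simp: sympl_def)

lemma sympl_count_commute: "sympl_count n P Q a b = sympl_count n Q P b a"
  by (simp add: sympl_count_def sympl_commute)

lemma rows_commute_iff_even: "rows_commute N M R1 R2 \<longleftrightarrow> even (sympl_count N M M R1 R2)"
  by (simp add: rows_commute_def sympl_mat_def sympl_count_def even_iff_mod_2_eq_zero)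

lemma mod_sum_sum_eq:
  fixes f :: "'a \<Rightarrow> 'b \<Rightarrow> nat"
  shows "(\<Sum>i\<in>A. \<Sum>j\<in>B. f i j mod m) mod m = (\<Sum>i\<in>A. \<Sum>j\<in>B. f i j) mod m"
proof -
  have "(\<Sum>i\<in>A. \<Sum>j\<in>B. f i j mod m) mod m = (\<Sum>i\<in>A. (\<Sum>j\<in>B. f i j mod m) mod m) mod m"
    by (rule mod_sum_eq[symmetric])
  also have "\<dots> = (\<Sum>i\<in>A. (\<Sum>j\<in>B. f i j) mod m) mod m"
    by (simp only: mod_sum_eq)
  also have "\<dots> = (\<Sum>i\<in>A. \<Sum>j\<in>B. f i j) mod m"
    by (rule mod_sum_eq)
  finally show ?thesis .
qed

lemma even_sum_sympl_count_iff:
  "(\<Sum>i\<in>A. \<Sum>j\<in>B. sympl_mat n (P i j) (Q i j) a b) mod 2 = 0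
     \<longleftrightarrow> even (\<Sum>i\<in>A. \<Sum>j\<in>B. sympl_count n (P i j) (Q i j) a b)"
  using mod_sum_sum_eq[where f="\<lambda>i j. sympl_count n (P i j) (Q i j) a b" and m=2]
  by (simp add: sympl_mat_def sympl_count_def even_iff_mod_2_eq_zero)

definition sc2d_component :: "nat \<Rightarrow> nat \<Rightarrow> (nat \<Rightarrow> nat \<Rightarrow> nat \<Rightarrow> nat \<Rightarrow> pauli) \<Rightarrow> nat \<Rightarrow> nat \<Rightarrow> nat \<Rightarrow> nat \<Rightarrow> pauli" where
  "sc2d_component m1 m2 Hc i j = (if i \<le> m1 \<and> j \<le> m2 then Hc i j else (\<lambda>_ _. PI))"

lemma sympl_count_sc2d_component_outside:
  "m1 < i \<or> m2 < j \<or> m1 < i' \<or> m2 < j' \<Longrightarrow>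
     sympl_count n (sc2d_component m1 m2 Hc i j) (sc2d_component m1 m2 Hc i' j') a b = 0"
  by (auto simp: sympl_count_def sc2d_component_def sympl_def)

lemma even_shift_sum_sc2d_component:
  assumes "d1 \<le> m1 \<Longrightarrow> d2 \<le> m2 \<Longrightarrow>
      (\<Sum>i\<le>m1 - d1. \<Sum>j\<le>m2 - d2. sympl_mat n (Hc i j) (Hc (i + d1) (j + d2)) a b) mod 2 = 0"
  shows "even (\<Sum>i\<le>m1 - d1. \<Sum>j\<le>m2 - d2.
      sympl_count n (sc2d_component m1 m2 Hc i j) (sc2d_component m1 m2 Hc (i + d1) (j + d2)) a b)"
proof (cases "d1 \<le> m1 \<and> d2 \<le> m2")
  case True
  then have "(\<Sum>i\<le>m1 - d1. \<Sum>j\<le>m2 - d2.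
        sympl_count n (sc2d_component m1 m2 Hc i j) (sc2d_component m1 m2 Hc (i + d1) (j + d2)) a b)
      = (\<Sum>i\<le>m1 - d1. \<Sum>j\<le>m2 - d2. sympl_count n (Hc i j) (Hc (i + d1) (j + d2)) a b)"
    by (intro sum.cong) (auto simp: sc2d_component_def)
  with True show ?thesis
    using assms by (simp flip: even_sum_sympl_count_iff)
next
  case False
  then show ?thesis
    by (subst sum.neutral) (auto intro!: sum.neutral sympl_count_sc2d_component_outside)
qed

lemma even_cross_shift_sum_sc2d_component:
  assumes "d1 \<le> m1 \<Longrightarrow> d2 \<le> m2 \<Longrightarrow>
      (\<Sum>i\<le>m1 - d1. \<Sum>j\<le>m2 - d2. sympl_mat n (Hc (i + d1) j) (Hc i (j + d2)) a b) mod 2 = 0"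
  shows "even (\<Sum>i\<le>m1 - d1. \<Sum>j\<le>m2 - d2.
      sympl_count n (sc2d_component m1 m2 Hc (i + d1) j) (sc2d_component m1 m2 Hc i (j + d2)) a b)"
proof (cases "d1 \<le> m1 \<and> d2 \<le> m2")
  case True
  then have "(\<Sum>i\<le>m1 - d1. \<Sum>j\<le>m2 - d2.
        sympl_count n (sc2d_component m1 m2 Hc (i + d1) j) (sc2d_component m1 m2 Hc i (j + d2)) a b)
      = (\<Sum>i\<le>m1 - d1. \<Sum>j\<le>m2 - d2. sympl_count n (Hc (i + d1) j) (Hc i (j + d2)) a b)"
    by (intro sum.cong) (auto simp: sc2d_component_def)
  with True show ?thesis
    using assms by (simp flip: even_sum_sympl_count_iff)
next
  case False
  then show ?thesis
    by (subst sum.neutral) (auto intro!: sum.neutral sympl_count_sc2d_component_outside)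
qed

lemma mod_eq_cyclic_diff_iff:
  "i < L \<Longrightarrow> int i mod int L = (int x - int y) mod int L \<longleftrightarrow> i = cyclic_diff L x y"
  by (auto simp: cyclic_diff_def)

lemma sc2d_block_eq_sc2d_component:
  assumes "m1 < L1" "m2 < L2"
  shows "sc2d_block m1 m2 L1 L2 r n Hc a b c d t k
       = sc2d_component m1 m2 Hc (cyclic_diff L1 a c) (cyclic_diff L2 b d) t k"
proof -
  have "int i mod int L1 = (int a - int c) mod int L1 \<longleftrightarrow> i = cyclic_diff L1 a c" if "i \<le> m1" for i
    using that assms by (intro mod_eq_cyclic_diff_iff) simp
  moreover have "int j mod int L2 = (int b - int d) mod int L2 \<longleftrightarrow> j = cyclic_diff L2 b d" if "j \<le> m2" for j
    using that assms by (intro mod_eq_cyclic_diff_iff) simp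
  ultimately have "(\<exists>i\<le>m1. \<exists>j\<le>m2. int i mod int L1 = (int a - int c) mod int L1
                       \<and> int j mod int L2 = (int b - int d) mod int L2)
      \<longleftrightarrow> cyclic_diff L1 a c \<le> m1 \<and> cyclic_diff L2 b d \<le> m2"
    by blast
  then show ?thesis
    by (simp add: sc2d_block_def sc2d_component_def Let_def flip: cyclic_diff_def)
qed

lemma sc2d_H_column:
  assumes "m1 < L1" "m2 < L2" "d < L2" "k < n"
  shows "sc2d_H m1 m2 L1 L2 r n Hc R ((c * L2 + d) * n + k)
       = sc2d_component m1 m2 Hc (cyclic_diff L1 (R div r div L2) c) (cyclic_diff L2 (R div r mod L2) d) (R mod r) k"
  using assms by (simp add: sc2d_H_def Let_def sc2d_block_eq_sc2d_component)

lemma sympl_count_sc2d_H: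
  assumes "m1 < L1" "m2 < L2"
  shows "sympl_count (n * L1 * L2) (sc2d_H m1 m2 L1 L2 r n Hc) (sc2d_H m1 m2 L1 L2 r n Hc) R1 R2
       = (\<Sum>i<L1. \<Sum>j<L2. sympl_count n (sc2d_component m1 m2 Hc i j)
            (sc2d_component m1 m2 Hc ((i + cyclic_diff L1 (R2 div r div L2) (R1 div r div L2)) mod L1)
                                ((j + cyclic_diff L2 (R2 div r mod L2) (R1 div r mod L2)) mod L2))
            (R1 mod r) (R2 mod r))"
    (is "_ = (\<Sum>i<L1. \<Sum>j<L2. ?S i j ((i + ?D1) mod L1) ((j + ?D2) mod L2))")
proof -
  let ?H = "sc2d_H m1 m2 L1 L2 r n Hc"
  let ?cd1 = "cyclic_diff L1" and ?cd2 = "cyclic_diff L2"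
  have "sympl_count (n * L1 * L2) ?H ?H R1 R2
      = (\<Sum>c<L1. \<Sum>d<L2. \<Sum>k<n. sympl (?H R1 ((c * L2 + d) * n + k)) (?H R2 ((c * L2 + d) * n + k)))"
    unfolding sympl_count_def mult.commute[of n "L1 * L2", unfolded mult.assoc[symmetric]]
      sum_lessThan_mult_eq[where m="L1 * L2"]
    by (rule sum_lessThan_mult_eq)
  also have "\<dots> = (\<Sum>c<L1. \<Sum>d<L2.
      ?S (?cd1 (R1 div r div L2) c) (?cd2 (R1 div r mod L2) d) (?cd1 (R2 div r div L2) c) (?cd2 (R2 div r mod L2) d))"
    using assms by (intro sum.cong refl) (simp add: sympl_count_def sc2d_H_column)
  also have "\<dots> = (\<Sum>c<L1. \<Sum>j<L2. ?S (?cd1 (R1 div r div L2) c) j (?cd1 (R2 div r div L2) c) ((j + ?D2) mod L2))"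
    using assms by (intro sum.cong refl sum_cyclic_diff_reindex) simp
  also have "\<dots> = (\<Sum>i<L1. \<Sum>j<L2. ?S i j ((i + ?D1) mod L1) ((j + ?D2) mod L2))"
    using assms by (intro sum_cyclic_diff_reindex) simp
  finally show ?thesis .
qed

lemma even_sympl_count_cyclic_shift:
  fixes m1 m2 :: nat and Hc :: "nat \<Rightarrow> nat \<Rightarrow> nat \<Rightarrow> nat \<Rightarrow> pauli"
  defines "E \<equiv> sc2d_component m1 m2 Hc"
  assumes "m1 < L1" "m2 < L2" "D1 < L1" "D2 < L2" "t < r" "t' < r"
    and cond1: "\<And>d1 d2 a b. d1 \<le> m1 \<Longrightarrow> d2 \<le> m2 \<Longrightarrow> a < r \<Longrightarrow> b < r \<Longrightarrow>
        (\<Sum>i\<le>m1 - d1. \<Sum>j\<le>m2 - d2. sympl_mat n (Hc i j) (Hc (i + d1) (j + d2)) a b) mod 2 = 0"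
    and cond2: "\<And>d1 d2 a b. d1 \<le> m1 \<Longrightarrow> d2 \<le> m2 \<Longrightarrow> a < r \<Longrightarrow> b < r \<Longrightarrow>
        (\<Sum>i\<le>m1 - d1. \<Sum>j\<le>m2 - d2. sympl_mat n (Hc (i + d1) j) (Hc i (j + d2)) a b) mod 2 = 0"
  shows "even (\<Sum>i<L1. \<Sum>j<L2. sympl_count n (E i j) (E ((i + D1) mod L1) ((j + D2) mod L2)) t t')"
proof -
  define E1 where "E1 = L1 - D1"
  define E2 where "E2 = L2 - D2"
  have "(\<Sum>i<L1. \<Sum>j<L2. sympl_count n (E i j) (E ((i + D1) mod L1) ((j + D2) mod L2)) t t')
      = (\<Sum>i\<le>m1 - D1. \<Sum>j\<le>m2 - D2. sympl_count n (E i j) (E (i + D1) (j + D2)) t t')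
      + (\<Sum>i\<le>m1 - D1. \<Sum>j\<le>m2 - E2. sympl_count n (E (i + D1) j) (E i (j + E2)) t' t)
      + (\<Sum>i\<le>m1 - E1. \<Sum>j\<le>m2 - D2. sympl_count n (E (i + E1) j) (E i (j + D2)) t t')
      + (\<Sum>i\<le>m1 - E1. \<Sum>j\<le>m2 - E2. sympl_count n (E i j) (E (i + E1) (j + E2)) t' t)"
    unfolding E1_def E2_def E_def
    using assms(2-5) sympl_count_sc2d_component_outside
    by (subst sum_cyclic_shift2_supported) (simp_all add: sympl_count_commute[of n _ _ t'])
  moreover have "even (\<Sum>i\<le>m1 - D1. \<Sum>j\<le>m2 - D2. sympl_count n (E i j) (E (i + D1) (j + D2)) t t')"
    unfolding E_def using assms(6,7) by (intro even_shift_sum_sc2d_component cond1)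
  moreover have "even (\<Sum>i\<le>m1 - D1. \<Sum>j\<le>m2 - E2. sympl_count n (E (i + D1) j) (E i (j + E2)) t' t)"
    unfolding E_def using assms(6,7) by (intro even_cross_shift_sum_sc2d_component cond2)
  moreover have "even (\<Sum>i\<le>m1 - E1. \<Sum>j\<le>m2 - D2. sympl_count n (E (i + E1) j) (E i (j + D2)) t t')"
    unfolding E_def using assms(6,7) by (intro even_cross_shift_sum_sc2d_component cond2)
  moreover have "even (\<Sum>i\<le>m1 - E1. \<Sum>j\<le>m2 - E2. sympl_count n (E i j) (E (i + E1) (j + E2)) t' t)"
    unfolding E_def using assms(6,7) by (intro even_shift_sum_sc2d_component cond1)
  ultimately show ?thesis
    by simp
qed

theorem theorem1:
  fixes r n m1 m2 L1 L2 :: nat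
    and Hc :: "nat \<Rightarrow> nat \<Rightarrow> nat \<Rightarrow> nat \<Rightarrow> pauli"
  assumes "r > 0" and "n > 0" and "m1 > 0" and "m2 > 0" and "L1 > 0" and "L2 > 0"
    and "L1 > m1" and "L2 > m2"
    and cond1: "\<And>d1 d2 a b. d1 \<le> m1 \<Longrightarrow> d2 \<le> m2 \<Longrightarrow> a < r \<Longrightarrow> b < r \<Longrightarrow>
        (\<Sum>i\<le>m1 - d1. \<Sum>j\<le>m2 - d2. sympl_mat n (Hc i j) (Hc (i + d1) (j + d2)) a b) mod 2 = 0"
    and cond2: "\<And>d1 d2 a b. d1 \<le> m1 \<Longrightarrow> d2 \<le> m2 \<Longrightarrow> a < r \<Longrightarrow> b < r \<Longrightarrow>
        (\<Sum>i\<le>m1 - d1. \<Sum>j\<le>m2 - d2. sympl_mat n (Hc (i + d1) j) (Hc i (j + d2)) a b) mod 2 = 0"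
  shows "\<forall>R1 < r * L1 * L2. \<forall>R2 < r * L1 * L2.
           rows_commute (n * L1 * L2) (sc2d_H m1 m2 L1 L2 r n Hc) R1 R2"
proof (intro allI impI)
  fix R1 R2
  have "even (sympl_count (n * L1 * L2) (sc2d_H m1 m2 L1 L2 r n Hc) (sc2d_H m1 m2 L1 L2 r n Hc) R1 R2)"
    unfolding sympl_count_sc2d_H[OF \<open>L1 > m1\<close> \<open>L2 > m2\<close>]
    using \<open>r > 0\<close> \<open>L1 > m1\<close> \<open>L2 > m2\<close>
    by (intro even_sympl_count_cyclic_shift cond1 cond2) (simp_all add: cyclic_diff_less)
  then show "rows_commute (n * L1 * L2) (sc2d_H m1 m2 L1 L2 r n Hc) R1 R2"
    by (simp add: rows_commute_iff_even)
qed

end
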